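(* Let $R$ be a left PBW ring with respect to $\preceq$, and let $G=\{\mathbf g_1,\dots,\mathbf g_t\}\subseteq R^m$ be a Gröbner basis of $R\mathbf g_1+\dots+R\mathbf g_t$ consisting of elements with leading coefficient $1$. Let $I=\{(i,j):1\le i<j\le t,\ \operatorname{level}(\mathbf g_i)=\operatorname{level}(\mathbf g_j)\}$ and, for each $(i,j)\in I$, choose $h_{ijk}\in R$ with $SP(\mathbf g_i,\mathbf g_j)=\sum_{k=1}^t h_{ijk}\mathbf g_k$ and $\max_\preceq\{\exp(h_{ijk})+\exp(\mathbf g_k)\}=\exp(SP(\mathbf g_i,\mathbf g_j))$. Put $\mathbf s_{ij}=r_{ij}\mathbf e'_i-r_{ji}\mathbf e'_j-\sum_k h_{ijk}\mathbf e'_k\in R^t$, where $\mathbf e'_1,\dots,\mathbf e'_t$ is the canonical basis of $R^t$. Then $\{\mathbf s_{ij}:(i,j)\in I\}$ is a Gröbner basis of $\operatorname{Syz}(G)=\{(a_1,\dots,a_t)\in R^t:\sum a_i\mathbf g_i=0\}$ with respect to the ordering $\preceq_G$ on $\mathbb N^n\times\{1,\dots,t\}$; in particular it generates $\operatorname{Syz}(G)$.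
   Context: $R$ contains a skew field $\mathbb D$ and $x_1,\dots,x_n$ with monomials $\mathbf x^\alpha$ a left $\mathbb D$-basis; $\preceq$ admissible on $\mathbb N^n$; left PBW: $\exp(fg)=\exp f+\exp g$. $q_{\alpha,\beta}\ne0$ is the coefficient of $\mathbf x^{\alpha+\beta}$ in $\mathbf x^\alpha\mathbf x^\beta$. In a free module $R^m$ with basis $\mathbf e_i$, $\mathbf f=\sum c_{(\alpha,i)}\mathbf x^\alpha\mathbf e_i$, $\mathcal N(\mathbf f)$ its support, exponents ordered by TOP ($(\alpha,i)\preceq(\beta,j)$ iff $\alpha\prec\beta$ or ($\alpha=\beta$, $i\le j$)), $\exp(\mathbf f)=\max\mathcal N(\mathbf f)=(\operatorname{sexp}\mathbf f,\operatorname{level}\mathbf f)$, leading coefficient $c_{\exp\mathbf f}$; $\mathbb N^n$ acts by $(\alpha,i)+\beta=(\alpha+\beta,i)$. A Gröbner basis of a submodule $L$ (w.r.t. a given admissible order on exponents) is a finite $G\subseteq L$ with $\{\exp\mathbf f:0\ne\mathbf f\in L\}=\bigcup(\exp\mathbf g_i+\mathbb N^n)$. With $\alpha_i=\operatorname{sexp}\mathbf g_i$ and $\vee$ componentwise max: $r_{ij}=q^{-1}_{\alpha_i\vee\alpha_j-\alpha_i,\alpha_i}\mathbf x^{\alpha_i\vee\alpha_j-\alpha_i}$, $SP(\mathbf g_i,\mathbf g_j)=r_{ij}\mathbf g_i-r_{ji}\mathbf g_j$. The order $\preceq_G$ on $\mathbb N^n\times\{1,\dots,t\}$: $(\alpha,i)\preceq_G(\beta,j)$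 iff $\alpha+\exp\mathbf g_i\prec\beta+\exp\mathbf g_j$ (in TOP), or $\alpha+\exp\mathbf g_i=\beta+\exp\mathbf g_j$ and $j\le i$; exponents of elements of $R^t$ are computed with $\preceq_G$ for this statement. *)

theory Defs
  imports Main
begin

definition Exps :: "nat \<Rightarrow> (nat \<Rightarrow> nat) set" where
  "Exps n = {\<alpha>. \<forall>i\<ge>n. \<alpha> i = 0}"

definition addE :: "(nat \<Rightarrow> nat) \<Rightarrow> (nat \<Rightarrow> nat) \<Rightarrow> (nat \<Rightarrow> nat)" where
  "addE \<alpha> \<beta> = (\<lambda>i. \<alpha> i + \<beta> i)"

definition subE :: "(nat \<Rightarrow> nat) \<Rightarrow> (nat \<Rightarrow> nat) \<Rightarrow> (nat \<Rightarrow> nat)" where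
  "subE \<alpha> \<beta> = (\<lambda>i. \<alpha> i - \<beta> i)"

definition supE :: "(nat \<Rightarrow> nat) \<Rightarrow> (nat \<Rightarrow> nat) \<Rightarrow> (nat \<Rightarrow> nat)" where
  "supE \<alpha> \<beta> = (\<lambda>i. max (\<alpha> i) (\<beta> i))"

definition zeroE :: "nat \<Rightarrow> nat" where "zeroE = (\<lambda>_. 0)"

definition admissible :: "nat \<Rightarrow> ((nat \<Rightarrow> nat) \<Rightarrow> (nat \<Rightarrow> nat) \<Rightarrow> bool) \<Rightarrow> bool" where
  "admissible n le \<longleftrightarrow>
     (\<forall>\<alpha>\<in>Exps n. le \<alpha> \<alpha>) \<and>
     (\<forall>\<alpha>\<in>Exps n. \<forall>\<beta>\<in>Exps n. \<forall>\<gamma>\<in>Exps n. le \<alpha> \<beta> \<longrightarrow> le \<beta> \<gamma> \<longrightarrow> le \<alpha> \<gamma>) \<and>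
     (\<forall>\<alpha>\<in>Exps n. \<forall>\<beta>\<in>Exps n. le \<alpha> \<beta> \<longrightarrow> le \<beta> \<alpha> \<longrightarrow> \<alpha> = \<beta>) \<and>
     (\<forall>\<alpha>\<in>Exps n. \<forall>\<beta>\<in>Exps n. le \<alpha> \<beta> \<or> le \<beta> \<alpha>) \<and>
     (\<forall>\<alpha>\<in>Exps n. le zeroE \<alpha>) \<and>
     (\<forall>\<alpha>\<in>Exps n. \<forall>\<beta>\<in>Exps n. \<forall>\<gamma>\<in>Exps n. le \<alpha> \<beta> \<longrightarrow> le (addE \<alpha> \<gamma>) (addE \<beta> \<gamma>))"

definition maxby :: "('a \<Rightarrow> 'a \<Rightarrow> bool) \<Rightarrow> 'a set \<Rightarrow> 'a" where
  "maxby le S = (THE m. m \<in> S \<and> (\<forall>s\<in>S. le s m))"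

definition skew_field :: "'r::ring_1 set \<Rightarrow> bool" where
  "skew_field D \<longleftrightarrow> (0::'r) \<in> D \<and> 1 \<in> D \<and> (1::'r) \<noteq> 0 \<and>
     (\<forall>a\<in>D. \<forall>b\<in>D. a + b \<in> D \<and> a * b \<in> D \<and> - a \<in> D) \<and>
     (\<forall>a\<in>D. a \<noteq> 0 \<longrightarrow> (\<exists>b\<in>D. a * b = 1 \<and> b * a = 1))"

definition dinv :: "'r::ring_1 set \<Rightarrow> 'r \<Rightarrow> 'r" where
  "dinv D a = (THE b. b \<in> D \<and> a * b = 1 \<and> b * a = 1)"

definition mono :: "(nat \<Rightarrow> 'r::ring_1) \<Rightarrow> nat \<Rightarrow> (nat \<Rightarrow> nat) \<Rightarrow> 'r" where
  "mono x n \<alpha> = foldr (\<lambda>i acc. x i ^ \<alpha> i * acc) [0..<n] 1"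

definition is_repr :: "'r::ring_1 set \<Rightarrow> (nat \<Rightarrow> 'r) \<Rightarrow> nat \<Rightarrow> 'r \<Rightarrow> ((nat \<Rightarrow> nat) \<Rightarrow> 'r) \<Rightarrow> bool" where
  "is_repr D x n f c \<longleftrightarrow> (\<forall>\<alpha>. c \<alpha> \<in> D) \<and> (\<forall>\<alpha>. \<alpha> \<notin> Exps n \<longrightarrow> c \<alpha> = 0) \<and>
     finite {\<alpha>. c \<alpha> \<noteq> 0} \<and> f = (\<Sum>\<alpha>\<in>{\<alpha>. c \<alpha> \<noteq> 0}. c \<alpha> * mono x n \<alpha>)"

text \<open>Coefficient of x^alpha in f (w.r.t. the left D-basis of monomials).\<close>
definition coef :: "'r::ring_1 set \<Rightarrow> (nat \<Rightarrow> 'r) \<Rightarrow> nat \<Rightarrow> 'r \<Rightarrow> (nat \<Rightarrow> nat) \<Rightarrow> 'r" where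
  "coef D x n f = (THE c. is_repr D x n f c)"

definition supp :: "'r::ring_1 set \<Rightarrow> (nat \<Rightarrow> 'r) \<Rightarrow> nat \<Rightarrow> 'r \<Rightarrow> (nat \<Rightarrow> nat) set" where
  "supp D x n f = {\<alpha>. coef D x n f \<alpha> \<noteq> 0}"

definition rexp :: "'r::ring_1 set \<Rightarrow> (nat \<Rightarrow> 'r) \<Rightarrow> nat \<Rightarrow> ((nat \<Rightarrow> nat) \<Rightarrow> (nat \<Rightarrow> nat) \<Rightarrow> bool)
    \<Rightarrow> 'r \<Rightarrow> (nat \<Rightarrow> nat)" where
  "rexp D x n le f = maxby le (supp D x n f)"

definition left_PBW :: "'r::ring_1 set \<Rightarrow> (nat \<Rightarrow> 'r) \<Rightarrow> nat \<Rightarrow> ((nat \<Rightarrow> nat) \<Rightarrow> (nat \<Rightarrow> nat) \<Rightarrow> bool) \<Rightarrow> bool" where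
  "left_PBW D x n le \<longleftrightarrow> skew_field D \<and> admissible n le \<and>
     (\<forall>f. \<exists>!c. is_repr D x n f c) \<and>
     (\<forall>f g. f \<noteq> 0 \<longrightarrow> g \<noteq> 0 \<longrightarrow>
        f * g \<noteq> 0 \<and> rexp D x n le (f * g) = addE (rexp D x n le f) (rexp D x n le g))"

definition qc :: "'r::ring_1 set \<Rightarrow> (nat \<Rightarrow> 'r) \<Rightarrow> nat \<Rightarrow> (nat \<Rightarrow> nat) \<Rightarrow> (nat \<Rightarrow> nat) \<Rightarrow> 'r" where
  "qc D x n \<alpha> \<beta> = coef D x n (mono x n \<alpha> * mono x n \<beta>) (addE \<alpha> \<beta>)"

definition vecs :: "nat \<Rightarrow> (nat \<Rightarrow> 'r::ring_1) set" where
  "vecs k = {f. \<forall>l. l \<notin> {1..k} \<longrightarrow> f l = 0}"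

definition vsupp :: "'r::ring_1 set \<Rightarrow> (nat \<Rightarrow> 'r) \<Rightarrow> nat \<Rightarrow> nat \<Rightarrow> (nat \<Rightarrow> 'r)
    \<Rightarrow> ((nat \<Rightarrow> nat) \<times> nat) set" where
  "vsupp D x n k f = {(\<alpha>, i). i \<in> {1..k} \<and> coef D x n (f i) \<alpha> \<noteq> 0}"

definition vexp :: "'r::ring_1 set \<Rightarrow> (nat \<Rightarrow> 'r) \<Rightarrow> nat \<Rightarrow> nat
    \<Rightarrow> ((nat \<Rightarrow> nat) \<times> nat \<Rightarrow> (nat \<Rightarrow> nat) \<times> nat \<Rightarrow> bool) \<Rightarrow> (nat \<Rightarrow> 'r) \<Rightarrow> (nat \<Rightarrow> nat) \<times> nat" where
  "vexp D x n k ord f = maxby ord (vsupp D x n k f)"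

definition lcoef :: "'r::ring_1 set \<Rightarrow> (nat \<Rightarrow> 'r) \<Rightarrow> nat \<Rightarrow> nat
    \<Rightarrow> ((nat \<Rightarrow> nat) \<times> nat \<Rightarrow> (nat \<Rightarrow> nat) \<times> nat \<Rightarrow> bool) \<Rightarrow> (nat \<Rightarrow> 'r) \<Rightarrow> 'r" where
  "lcoef D x n k ord f = coef D x n (f (snd (vexp D x n k ord f))) (fst (vexp D x n k ord f))"

definition addP :: "(nat \<Rightarrow> nat) \<times> nat \<Rightarrow> (nat \<Rightarrow> nat) \<Rightarrow> (nat \<Rightarrow> nat) \<times> nat" where
  "addP p \<beta> = (addE (fst p) \<beta>, snd p)"

definition TOP :: "((nat \<Rightarrow> nat) \<Rightarrow> (nat \<Rightarrow> nat) \<Rightarrow> bool)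
    \<Rightarrow> (nat \<Rightarrow> nat) \<times> nat \<Rightarrow> (nat \<Rightarrow> nat) \<times> nat \<Rightarrow> bool" where
  "TOP le p q \<longleftrightarrow> (le (fst p) (fst q) \<and> fst p \<noteq> fst q) \<or> (fst p = fst q \<and> snd p \<le> snd q)"

definition is_GB :: "'r::ring_1 set \<Rightarrow> (nat \<Rightarrow> 'r) \<Rightarrow> nat \<Rightarrow> nat
    \<Rightarrow> ((nat \<Rightarrow> nat) \<times> nat \<Rightarrow> (nat \<Rightarrow> nat) \<times> nat \<Rightarrow> bool)
    \<Rightarrow> (nat \<Rightarrow> 'r) set \<Rightarrow> (nat \<Rightarrow> 'r) set \<Rightarrow> bool" where
  "is_GB D x n k ord G L \<longleftrightarrow> finite G \<and> G \<subseteq> L \<and> (\<lambda>_. 0) \<notin> G \<and>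
     {vexp D x n k ord f | f. f \<in> L \<and> f \<noteq> (\<lambda>_. 0)}
       = (\<Union>g\<in>G. {addP (vexp D x n k ord g) \<beta> | \<beta>. \<beta> \<in> Exps n})"

definition submod :: "nat \<Rightarrow> (nat \<Rightarrow> nat \<Rightarrow> 'r::ring_1) \<Rightarrow> (nat \<Rightarrow> 'r) set" where
  "submod t g = {(\<lambda>l. \<Sum>i\<in>{1..t}. a i * g i l) | a. True}"

definition Syz :: "nat \<Rightarrow> (nat \<Rightarrow> nat \<Rightarrow> 'r::ring_1) \<Rightarrow> (nat \<Rightarrow> 'r) set" where
  "Syz t g = {a. a \<in> vecs t \<and> (\<lambda>l. \<Sum>i\<in>{1..t}. a i * g i l) = (\<lambda>_. 0)}"

definition rcoef :: "'r::ring_1 set \<Rightarrow> (nat \<Rightarrow> 'r) \<Rightarrow> nat \<Rightarrow> ((nat \<Rightarrow> nat) \<Rightarrow> (nat \<Rightarrow> nat) \<Rightarrow> bool)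
    \<Rightarrow> nat \<Rightarrow> (nat \<Rightarrow> nat \<Rightarrow> 'r) \<Rightarrow> nat \<Rightarrow> nat \<Rightarrow> 'r" where
  "rcoef D x n le m g i j =
     (let ai = fst (vexp D x n m (TOP le) (g i));
          aj = fst (vexp D x n m (TOP le) (g j));
          d = subE (supE ai aj) ai
      in dinv D (qc D x n d ai) * mono x n d)"

definition SP :: "'r::ring_1 set \<Rightarrow> (nat \<Rightarrow> 'r) \<Rightarrow> nat \<Rightarrow> ((nat \<Rightarrow> nat) \<Rightarrow> (nat \<Rightarrow> nat) \<Rightarrow> bool)
    \<Rightarrow> nat \<Rightarrow> (nat \<Rightarrow> nat \<Rightarrow> 'r) \<Rightarrow> nat \<Rightarrow> nat \<Rightarrow> (nat \<Rightarrow> 'r)" where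
  "SP D x n le m g i j =
     (\<lambda>l. rcoef D x n le m g i j * g i l - rcoef D x n le m g j i * g j l)"

definition ordG :: "'r::ring_1 set \<Rightarrow> (nat \<Rightarrow> 'r) \<Rightarrow> nat \<Rightarrow> ((nat \<Rightarrow> nat) \<Rightarrow> (nat \<Rightarrow> nat) \<Rightarrow> bool)
    \<Rightarrow> nat \<Rightarrow> (nat \<Rightarrow> nat \<Rightarrow> 'r)
    \<Rightarrow> (nat \<Rightarrow> nat) \<times> nat \<Rightarrow> (nat \<Rightarrow> nat) \<times> nat \<Rightarrow> bool" where
  "ordG D x n le m g p q \<longleftrightarrow>
     (let P = addP (vexp D x n m (TOP le) (g (snd p))) (fst p);
          Q = addP (vexp D x n m (TOP le) (g (snd q))) (fst q)
      in (TOP le P Q \<and> P \<noteq> Q) \<or> (P = Q \<and> snd q \<le> snd p))"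

definition Ipairs :: "'r::ring_1 set \<Rightarrow> (nat \<Rightarrow> 'r) \<Rightarrow> nat \<Rightarrow> ((nat \<Rightarrow> nat) \<Rightarrow> (nat \<Rightarrow> nat) \<Rightarrow> bool)
    \<Rightarrow> nat \<Rightarrow> nat \<Rightarrow> (nat \<Rightarrow> nat \<Rightarrow> 'r) \<Rightarrow> (nat \<times> nat) set" where
  "Ipairs D x n le m t g = {(i, j). 1 \<le> i \<and> i < j \<and> j \<le> t \<and>
      snd (vexp D x n m (TOP le) (g i)) = snd (vexp D x n m (TOP le) (g j))}"

definition syzvec :: "'r::ring_1 set \<Rightarrow> (nat \<Rightarrow> 'r) \<Rightarrow> nat \<Rightarrow> ((nat \<Rightarrow> nat) \<Rightarrow> (nat \<Rightarrow> nat) \<Rightarrow> bool)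
    \<Rightarrow> nat \<Rightarrow> nat \<Rightarrow> (nat \<Rightarrow> nat \<Rightarrow> 'r) \<Rightarrow> (nat \<Rightarrow> nat \<Rightarrow> nat \<Rightarrow> 'r) \<Rightarrow> nat \<Rightarrow> nat \<Rightarrow> (nat \<Rightarrow> 'r)" where
  "syzvec D x n le m t g h i j =
     (\<lambda>k. (if k = i then rcoef D x n le m g i j else 0)
        - (if k = j then rcoef D x n le m g j i else 0)
        - (if k \<in> {1..t} then h i j k else 0))"

end

(*
  Schreyer's argument. Order R^t by ordG, i.e. compare (\<beta>, k) through exp g_k + \<beta>,
  breaking ties in favour of the smaller index. For a pair (i, j) with equal levels the
  leading terms of r_ij g_i and r_ji g_j cancel, so every term h_ijk g_k of the standard
  representation of SP(g_i, g_j) lies strictly below (\<alpha>_i \<or> \<alpha>_j, level); hence the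
  exponent of s_ij is (\<alpha>_i \<or> \<alpha>_j - \<alpha>_i, i), the tie with the j-th component being
  resolved by i < j. Conversely, if a is a nonzero syzygy with exponent (\<beta>, i), the
  leading term of a_i g_i must cancel in \<Sigma> a_k g_k against some a_j g_j with the same
  lifted exponent; the tie-break forces i < j, the levels agree, and \<beta> is a multiple of
  \<alpha>_i \<or> \<alpha>_j - \<alpha>_i. Monomial multiples of the s_ij realise all these exponents.
*)

theory Submission
  imports Defs
begin

definition total_order_on :: "'a set \<Rightarrow> ('a \<Rightarrow> 'a \<Rightarrow> bool) \<Rightarrow> bool" where
  "total_order_on A ord \<longleftrightarrow>
     (\<forall>a\<in>A. \<forall>b\<in>A. \<forall>c\<in>A. ord a b \<longrightarrow> ord b c \<longrightarrow> ord a c) \<and>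
     (\<forall>a\<in>A. \<forall>b\<in>A. ord a b \<or> ord b a) \<and>
     (\<forall>a\<in>A. \<forall>b\<in>A. ord a b \<longrightarrow> ord b a \<longrightarrow> a = b)"

lemma total_order_onI:
  assumes "\<And>a b c. a \<in> A \<Longrightarrow> b \<in> A \<Longrightarrow> c \<in> A \<Longrightarrow> ord a b \<Longrightarrow> ord b c \<Longrightarrow> ord a c"
    and "\<And>a b. a \<in> A \<Longrightarrow> b \<in> A \<Longrightarrow> ord a b \<or> ord b a"
    and "\<And>a b. a \<in> A \<Longrightarrow> b \<in> A \<Longrightarrow> ord a b \<Longrightarrow> ord b a \<Longrightarrow> a = b"
  shows "total_order_on A ord"
  using assms unfolding total_order_on_def by blast

lemma total_order_on_subset: "total_order_on A ord \<Longrightarrow> B \<subseteq> A \<Longrightarrow> total_order_on B ord"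
  unfolding total_order_on_def by blast

lemma finite_total_order_ex_greatest:
  assumes "total_order_on S ord" "finite S" "S \<noteq> {}"
  shows "\<exists>p\<in>S. \<forall>s\<in>S. ord s p"
  using assms(2,3,1)
proof (induction S rule: finite_ne_induct)
  case (singleton a)
  then have "ord a a" unfolding total_order_on_def by blast
  then show ?case by blast
next
  case (insert a F)
  have "total_order_on F ord"
    using insert.prems total_order_on_subset by blast
  then obtain p where p: "p \<in> F" "\<forall>s\<in>F. ord s p"
    using insert.IH by blast
  have tr: "\<And>s. s \<in> F \<Longrightarrow> ord s p \<Longrightarrow> ord p a \<Longrightarrow> ord s a"
    and tot: "ord a p \<or> ord p a" and refl: "ord a a"
    using insert.prems p(1) unfolding total_order_on_def by blast+
  show ?case
  proof (cases "ord a p")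
    case True
    then show ?thesis using p by blast
  next
    case False
    then show ?thesis using p tr tot refl by blast
  qed
qed

lemma maxby_eqI:
  assumes "total_order_on S ord" "p \<in> S" "\<forall>s\<in>S. ord s p"
  shows "maxby ord S = p"
  unfolding maxby_def
proof (rule the_equality)
  show "p \<in> S \<and> (\<forall>s\<in>S. ord s p)" using assms(2,3) by blast
next
  fix q assume "q \<in> S \<and> (\<forall>s\<in>S. ord s q)"
  then show "q = p" using assms unfolding total_order_on_def by blast
qed

lemma maxby_greatest:
  assumes "total_order_on S ord" "finite S" "S \<noteq> {}"
  shows "maxby ord S \<in> S" "\<forall>s\<in>S. ord s (maxby ord S)"
  using finite_total_order_ex_greatest[OF assms] maxby_eqI[OF assms(1)] by auto

lemma total_order_on_lex_comb:
  fixes f :: "'a \<Rightarrow> 'b" and h :: "'a \<Rightarrow> nat"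
  assumes R: "total_order_on (f ` A) R"
    and inj: "\<And>p q. p \<in> A \<Longrightarrow> q \<in> A \<Longrightarrow> f p = f q \<Longrightarrow> h p = h q \<Longrightarrow> p = q"
  shows "total_order_on A (\<lambda>p q. (R (f p) (f q) \<and> f p \<noteq> f q) \<or> (f p = f q \<and> h q \<le> h p))"
proof (rule total_order_onI)
  fix p q r assume A: "p \<in> A" "q \<in> A" "r \<in> A"
  have tr: "R (f p) (f q) \<Longrightarrow> R (f q) (f r) \<Longrightarrow> R (f p) (f r)"
    and an: "R (f p) (f q) \<Longrightarrow> R (f q) (f p) \<Longrightarrow> f p = f q"
    using R A unfolding total_order_on_def by blast+
  assume "(R (f p) (f q) \<and> f p \<noteq> f q) \<or> (f p = f q \<and> h q \<le> h p)"
    and "(R (f q) (f r) \<and> f q \<noteq> f r) \<or> (f q = f r \<and> h r \<le> h q)"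
  then show "(R (f p) (f r) \<and> f p \<noteq> f r) \<or> (f p = f r \<and> h r \<le> h p)"
  proof (elim disjE conjE)
    assume "R (f p) (f q)" "f p \<noteq> f q" "R (f q) (f r)" "f q \<noteq> f r"
    moreover have "f p \<noteq> f r"
    proof
      assume "f p = f r"
      then have "R (f q) (f p)" using \<open>R (f q) (f r)\<close> by simp
      then show False using an \<open>R (f p) (f q)\<close> \<open>f p \<noteq> f q\<close> by blast
    qed
    ultimately show ?thesis using tr by blast
  qed simp_all
next
  fix p q assume A: "p \<in> A" "q \<in> A"
  then have "R (f p) (f q) \<or> R (f q) (f p)"
    using R unfolding total_order_on_def by blast
  then show "((R (f p) (f q) \<and> f p \<noteq> f q) \<or> (f p = f q \<and> h q \<le> h p)) \<or>
      ((R (f q) (f p) \<and> f q \<noteq> f p) \<or> (f q = f p \<and> h p \<le> h q))"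
    by (cases "f p = f q") (simp_all add: nat_le_linear)
next
  fix p q assume A: "p \<in> A" "q \<in> A"
  have an: "R (f p) (f q) \<Longrightarrow> R (f q) (f p) \<Longrightarrow> f p = f q"
    using R A unfolding total_order_on_def by blast
  assume "(R (f p) (f q) \<and> f p \<noteq> f q) \<or> (f p = f q \<and> h q \<le> h p)"
    and "(R (f q) (f p) \<and> f q \<noteq> f p) \<or> (f q = f p \<and> h p \<le> h q)"
  then have "f p = f q \<and> h p = h q"
  proof (elim disjE conjE)
    assume "R (f p) (f q)" "f p \<noteq> f q" "R (f q) (f p)"
    then show ?thesis using an by blast
  qed simp_all
  then show "p = q" using inj A by blast
qed

lemma addE_commute: "addE a b = addE b a"
  by (auto simp: addE_def)

lemma addE_assoc: "addE (addE a b) c = addE a (addE b c)"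
  by (auto simp: addE_def)

lemma addE_zeroE [simp]: "addE zeroE a = a" "addE a zeroE = a"
  by (auto simp: addE_def zeroE_def)

lemma addE_left_cancel [simp]: "addE a b = addE a c \<longleftrightarrow> b = c"
  by (auto simp: addE_def fun_eq_iff)

lemma addE_right_cancel [simp]: "addE b a = addE c a \<longleftrightarrow> b = c"
  by (auto simp: addE_def fun_eq_iff)

lemma Exps_addE [simp]: "a \<in> Exps n \<Longrightarrow> b \<in> Exps n \<Longrightarrow> addE a b \<in> Exps n"
  and Exps_subE [simp]: "a \<in> Exps n \<Longrightarrow> subE a b \<in> Exps n"
  and Exps_supE [simp]: "a \<in> Exps n \<Longrightarrow> b \<in> Exps n \<Longrightarrow> supE a b \<in> Exps n"
  and Exps_zeroE [simp]: "zeroE \<in> Exps n"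
  by (auto simp: Exps_def addE_def subE_def supE_def zeroE_def)

lemma addE_subE_supE: "addE a (subE (supE a b) a) = supE a b"
  by (auto simp: addE_def subE_def supE_def fun_eq_iff)

lemma addP_inj: "addP p b = addP q b \<longleftrightarrow> p = q"
  by (auto simp: addP_def prod_eq_iff)

lemma snd_addP [simp]: "snd (addP p b) = snd p"
  by (simp add: addP_def)

lemma supE_commute: "supE a b = supE b a"
  by (auto simp: supE_def fun_eq_iff)

text \<open>From \<open>b + d = a + c\<close> we get \<open>c \<ge> (a \<or> b) - a\<close> componentwise.\<close>
lemma addE_eq_imp_cofactor_split:
  assumes "addE b d = addE a c"
  shows "addE (subE (supE a b) a) (subE c (subE (supE a b) a)) = c"
proof -
  have "b z + d z = a z + c z" for z
    using assms by (auto simp: addE_def fun_eq_iff)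
  then have "max (a z) (b z) - a z \<le> c z" for z
    by (metis add_diff_cancel_left' diff_le_mono le_add1 max_def)
  then show ?thesis
    unfolding addE_def subE_def supE_def fun_eq_iff by (metis le_add_diff_inverse)
qed

lemma mono_zeroE: "mono x n zeroE = 1"
proof -
  have "foldr (\<lambda>i acc. x i ^ zeroE i * acc) is 1 = 1" for "is"
    by (induction "is") (auto simp: zeroE_def)
  then show ?thesis by (simp add: mono_def)
qed

locale admissible_order =
  fixes n :: nat and le :: "(nat \<Rightarrow> nat) \<Rightarrow> (nat \<Rightarrow> nat) \<Rightarrow> bool"
  assumes admissible: "admissible n le"
begin

lemma le_refl: "a \<in> Exps n \<Longrightarrow> le a a"
  and le_trans: "a \<in> Exps n \<Longrightarrow> b \<in> Exps n \<Longrightarrow> c \<in> Exps n \<Longrightarrow> le a b \<Longrightarrow> le b c \<Longrightarrow> le a c"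
  and le_antisym: "a \<in> Exps n \<Longrightarrow> b \<in> Exps n \<Longrightarrow> le a b \<Longrightarrow> le b a \<Longrightarrow> a = b"
  and le_total: "a \<in> Exps n \<Longrightarrow> b \<in> Exps n \<Longrightarrow> le a b \<or> le b a"
  and le_addE_right: "a \<in> Exps n \<Longrightarrow> b \<in> Exps n \<Longrightarrow> c \<in> Exps n \<Longrightarrow> le a b \<Longrightarrow> le (addE a c) (addE b c)"
  using admissible unfolding admissible_def by blast+

lemma le_addE_left: "a \<in> Exps n \<Longrightarrow> b \<in> Exps n \<Longrightarrow> c \<in> Exps n \<Longrightarrow> le a b \<Longrightarrow> le (addE c a) (addE c b)"
  using le_addE_right by (metis addE_commute)

lemma le_addE_left_cancel:
  assumes "a \<in> Exps n" "b \<in> Exps n" "c \<in> Exps n" "le (addE c a) (addE c b)"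
  shows "le a b"
proof (rule ccontr)
  assume "\<not> le a b"
  then have "le (addE c b) (addE c a)"
    using le_total[OF assms(1,2)] le_addE_left[OF assms(2,1,3)] by blast
  then have "a = b" using le_antisym[of "addE c a" "addE c b"] assms by simp
  then show False using \<open>\<not> le a b\<close> le_refl assms(1) by blast
qed

lemma total_order_on_le: "total_order_on (Exps n) le"
  by (rule total_order_onI) (use le_trans le_total le_antisym in blast)+

lemma TOP_refl: "TOP le p p"
  by (simp add: TOP_def)

lemma TOP_same_level: "le a b \<Longrightarrow> TOP le (a, l) (b, l)"
  by (auto simp: TOP_def)

lemma TOP_same_level_strict: "TOP le (a, l) (b, l) \<Longrightarrow> a \<noteq> b \<Longrightarrow> le a b"
  by (auto simp: TOP_def)

lemma TOP_trans:
  assumes "fst p \<in> Exps n" "fst q \<in> Exps n" "fst r \<in> Exps n" "TOP le p q" "TOP le q r"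
  shows "TOP le p r"
  using assms le_trans[of "fst p" "fst q" "fst r"] le_antisym[of "fst p" "fst q"]
  unfolding TOP_def by auto

lemma TOP_antisym:
  assumes "fst p \<in> Exps n" "fst q \<in> Exps n" "TOP le p q" "TOP le q p"
  shows "p = q"
proof (cases "fst p = fst q")
  case True
  then have "snd p \<le> snd q" "snd q \<le> snd p" using assms(3,4) by (auto simp: TOP_def)
  then show ?thesis using True by (simp add: prod_eq_iff)
next
  case False
  then show ?thesis using assms(3,4) le_antisym[OF assms(1,2)] unfolding TOP_def by metis
qed

lemma total_order_on_TOP: "total_order_on (Exps n \<times> L) (TOP le)"
proof (rule total_order_onI)
  fix p q assume "p \<in> Exps n \<times> L" "q \<in> Exps n \<times> L"
  then show "TOP le p q \<or> TOP le q p"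
    using le_total[of "fst p" "fst q"] unfolding TOP_def by auto
next
  fix p q r assume "p \<in> Exps n \<times> L" "q \<in> Exps n \<times> L" "r \<in> Exps n \<times> L"
    and "TOP le p q" "TOP le q r"
  then show "TOP le p r" using TOP_trans[of p q r] by (simp add: mem_Times_iff)
next
  fix p q assume "p \<in> Exps n \<times> L" "q \<in> Exps n \<times> L" "TOP le p q" "TOP le q p"
  then show "p = q" using TOP_antisym[of p q] by (simp add: mem_Times_iff)
qed

lemma TOP_addP:
  "fst p \<in> Exps n \<Longrightarrow> fst q \<in> Exps n \<Longrightarrow> b \<in> Exps n \<Longrightarrow> TOP le p q \<Longrightarrow> TOP le (addP p b) (addP q b)"
  using le_addE_right[of "fst p" "fst q" b] unfolding TOP_def addP_def by auto

end

locale pbw_ring =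
  fixes D :: "'r::ring_1 set" and x :: "nat \<Rightarrow> 'r" and n :: nat
    and le :: "(nat \<Rightarrow> nat) \<Rightarrow> (nat \<Rightarrow> nat) \<Rightarrow> bool"
  assumes PBW: "left_PBW D x n le"

sublocale pbw_ring \<subseteq> admissible_order n le
  using PBW by unfold_locales (simp add: left_PBW_def)

context pbw_ring
begin

lemma mult_nonzero: "f \<noteq> 0 \<Longrightarrow> g \<noteq> 0 \<Longrightarrow> f * g \<noteq> 0"
  and rexp_mult: "f \<noteq> 0 \<Longrightarrow> g \<noteq> 0 \<Longrightarrow> rexp D x n le (f * g) = addE (rexp D x n le f) (rexp D x n le g)"
  using PBW unfolding left_PBW_def by blast+

lemma D_zero: "0 \<in> D" and D_one: "1 \<in> D" and one_neq_zero: "(1::'r) \<noteq> 0"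
  and D_add: "a \<in> D \<Longrightarrow> b \<in> D \<Longrightarrow> a + b \<in> D"
  and D_mult: "a \<in> D \<Longrightarrow> b \<in> D \<Longrightarrow> a * b \<in> D"
  and D_uminus: "a \<in> D \<Longrightarrow> - a \<in> D"
  using PBW by (auto simp: left_PBW_def skew_field_def)

lemma
  assumes "a \<in> D" "a \<noteq> 0"
  shows dinv_in_D: "dinv D a \<in> D" and dinv_left: "dinv D a * a = 1"
proof -
  obtain b where b: "b \<in> D" "a * b = 1" "b * a = 1"
    using PBW assms by (auto simp: left_PBW_def skew_field_def)
  have "c = b" if "a * c = 1" "c * a = 1" for c
    by (metis b(2) mult.assoc mult_1_left mult_1_right that(2))
  then have "dinv D a = b"
    unfolding dinv_def using b by blast
  then show "dinv D a \<in> D" "dinv D a * a = 1" using b by auto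
qed

lemma coef_is_repr: "is_repr D x n f (coef D x n f)"
  unfolding coef_def using PBW by (simp add: left_PBW_def theI')

lemma coef_eqI: "is_repr D x n f c \<Longrightarrow> coef D x n f = c"
  using coef_is_repr PBW unfolding left_PBW_def by blast

lemma coef_in_D: "coef D x n f a \<in> D"
  and coef_outside_Exps: "a \<notin> Exps n \<Longrightarrow> coef D x n f a = 0"
  and finite_supp: "finite (supp D x n f)"
  and coef_expansion: "f = (\<Sum>a\<in>supp D x n f. coef D x n f a * mono x n a)"
  using coef_is_repr by (simp_all add: is_repr_def supp_def)

lemma supp_subset_Exps: "supp D x n f \<subseteq> Exps n"
  using coef_outside_Exps by (auto simp: supp_def)

lemma coef_expansion_superset:
  assumes "finite S" "supp D x n f \<subseteq> S"
  shows "f = (\<Sum>a\<in>S. coef D x n f a * mono x n a)"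
proof -
  have "(\<Sum>a\<in>S. coef D x n f a * mono x n a) = (\<Sum>a\<in>supp D x n f. coef D x n f a * mono x n a)"
    by (rule sum.mono_neutral_right) (use assms in \<open>auto simp: supp_def\<close>)
  then show ?thesis using coef_expansion by simp
qed

lemma coef_eq_expansionI:
  assumes "\<forall>a. c a \<in> D" "\<forall>a. a \<notin> Exps n \<longrightarrow> c a = 0" "finite S" "{a. c a \<noteq> 0} \<subseteq> S"
    and "f = (\<Sum>a\<in>S. c a * mono x n a)"
  shows "coef D x n f = c"
proof (rule coef_eqI)
  have "(\<Sum>a\<in>S. c a * mono x n a) = (\<Sum>a\<in>{a. c a \<noteq> 0}. c a * mono x n a)"
    by (rule sum.mono_neutral_right) (use assms in auto)
  then show "is_repr D x n f c"
    using assms finite_subset unfolding is_repr_def by auto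
qed

lemma coef_0: "coef D x n 0 = (\<lambda>_. 0)"
  by (rule coef_eq_expansionI[where S = "{}"]) (auto simp: D_zero)

lemma nonzero_if_coef_nonzero: "coef D x n f a \<noteq> 0 \<Longrightarrow> f \<noteq> 0"
  using coef_0 by auto

lemma coef_add: "coef D x n (f + g) = (\<lambda>a. coef D x n f a + coef D x n g a)"
proof (rule coef_eq_expansionI[where S = "supp D x n f \<union> supp D x n g"])
  let ?S = "supp D x n f \<union> supp D x n g"
  have "f = (\<Sum>a\<in>?S. coef D x n f a * mono x n a)" "g = (\<Sum>a\<in>?S. coef D x n g a * mono x n a)"
    by (rule coef_expansion_superset; auto simp: finite_supp)+
  then show "f + g = (\<Sum>a\<in>?S. (coef D x n f a + coef D x n g a) * mono x n a)"
    by (simp add: sum.distrib distrib_right)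
qed (auto simp: D_add coef_in_D coef_outside_Exps finite_supp finite_supp[unfolded supp_def] supp_def)

lemma coef_D_mult:
  assumes "c \<in> D"
  shows "coef D x n (c * f) = (\<lambda>a. c * coef D x n f a)"
proof (rule coef_eq_expansionI[where S = "supp D x n f"])
  show "c * f = (\<Sum>a\<in>supp D x n f. (c * coef D x n f a) * mono x n a)"
    by (subst coef_expansion) (simp add: sum_distrib_left mult.assoc)
qed (auto simp: D_mult assms coef_in_D coef_outside_Exps finite_supp finite_supp[unfolded supp_def] supp_def)

lemma coef_uminus: "coef D x n (- f) = (\<lambda>a. - coef D x n f a)"
  using coef_D_mult[of "- 1" f] D_uminus[OF D_one] by simp

lemma coef_diff: "coef D x n (f - g) = (\<lambda>a. coef D x n f a - coef D x n g a)"
  using coef_add[of f "- g"] coef_uminus[of g] by simp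

lemma coef_sum: "finite A \<Longrightarrow> coef D x n (\<Sum>k\<in>A. F k) a = (\<Sum>k\<in>A. coef D x n (F k) a)"
  by (induction A rule: finite_induct) (auto simp: coef_0 coef_add)

lemma coef_mono: "b \<in> Exps n \<Longrightarrow> coef D x n (mono x n b) = (\<lambda>a. if a = b then 1 else 0)"
  by (rule coef_eq_expansionI[where S = "{b}"]) (auto simp: D_zero D_one)

lemma coef_D_elem: "c \<in> D \<Longrightarrow> coef D x n c = (\<lambda>a. if a = zeroE then c else 0)"
  by (rule coef_eq_expansionI[where S = "{zeroE}"]) (auto simp: D_zero mono_zeroE)

lemma supp_nonempty: "f \<noteq> 0 \<Longrightarrow> supp D x n f \<noteq> {}"
  using coef_expansion[of f] by auto

lemma
  assumes "f \<noteq> 0"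
  shows rexp_in_supp: "rexp D x n le f \<in> supp D x n f"
    and le_rexp_supp: "\<forall>b\<in>supp D x n f. le b (rexp D x n le f)"
  using maxby_greatest[OF total_order_on_subset[OF total_order_on_le supp_subset_Exps]
      finite_supp supp_nonempty[OF assms]]
  unfolding rexp_def by blast+

lemma rexp_eqI: "p \<in> supp D x n f \<Longrightarrow> \<forall>b\<in>supp D x n f. le b p \<Longrightarrow> rexp D x n le f = p"
  unfolding rexp_def
  by (rule maxby_eqI[OF total_order_on_subset[OF total_order_on_le supp_subset_Exps]])

lemma rexp_in_Exps: "f \<noteq> 0 \<Longrightarrow> rexp D x n le f \<in> Exps n"
  using rexp_in_supp supp_subset_Exps by blast

lemma coef_rexp_nonzero: "f \<noteq> 0 \<Longrightarrow> coef D x n f (rexp D x n le f) \<noteq> 0"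
  using rexp_in_supp by (auto simp: supp_def)

lemma le_rexp: "coef D x n f b \<noteq> 0 \<Longrightarrow> le b (rexp D x n le f)"
  using le_rexp_supp nonzero_if_coef_nonzero by (auto simp: supp_def)

lemma mono_nonzero: "a \<in> Exps n \<Longrightarrow> mono x n a \<noteq> 0"
  using coef_mono[of a] coef_0 one_neq_zero by (metis (full_types))

lemma rexp_mono: "a \<in> Exps n \<Longrightarrow> rexp D x n le (mono x n a) = a"
  by (rule rexp_eqI) (auto simp: supp_def coef_mono one_neq_zero le_refl)

lemma rexp_D_elem: "c \<in> D \<Longrightarrow> c \<noteq> 0 \<Longrightarrow> rexp D x n le c = zeroE"
  by (rule rexp_eqI) (auto simp: supp_def coef_D_elem le_refl)

lemma rexp_D_mult: "c \<in> D \<Longrightarrow> c \<noteq> 0 \<Longrightarrow> f \<noteq> 0 \<Longrightarrow> rexp D x n le (c * f) = rexp D x n le f"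
  using rexp_mult rexp_D_elem by simp

lemma rexp_uminus: "rexp D x n le (- f) = rexp D x n le f"
  unfolding rexp_def supp_def coef_uminus by simp

lemma rexp_diff_lower:
  assumes f: "f \<noteq> 0"
    and g: "g \<noteq> 0 \<Longrightarrow> le (rexp D x n le g) (rexp D x n le f) \<and> rexp D x n le g \<noteq> rexp D x n le f"
  shows "f - g \<noteq> 0" "rexp D x n le (f - g) = rexp D x n le f"
proof -
  let ?a = "rexp D x n le f"
  have g_below: "le b ?a" if "coef D x n g b \<noteq> 0" for b
    using that g le_rexp[OF that] le_trans coef_outside_Exps rexp_in_Exps f nonzero_if_coef_nonzero
    by blast
  have "coef D x n g ?a = 0"
    using g g_below le_antisym rexp_in_Exps f nonzero_if_coef_nonzero le_rexp by metis
  then have lead: "coef D x n (f - g) ?a \<noteq> 0"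
    using coef_rexp_nonzero[OF f] by (simp add: coef_diff)
  then show "f - g \<noteq> 0" by (rule nonzero_if_coef_nonzero)
  show "rexp D x n le (f - g) = ?a"
  proof (rule rexp_eqI)
    show "?a \<in> supp D x n (f - g)" using lead by (simp add: supp_def)
    show "\<forall>b\<in>supp D x n (f - g). le b ?a"
    proof
      fix b assume "b \<in> supp D x n (f - g)"
      then have "coef D x n f b \<noteq> 0 \<or> coef D x n g b \<noteq> 0"
        by (auto simp: supp_def coef_diff)
      then show "le b ?a" using le_rexp[of f] g_below by blast
    qed
  qed
qed

lemma qc_in_D: "qc D x n d a \<in> D"
  by (simp add: qc_def coef_in_D)

lemma qc_nonzero:
  assumes "d \<in> Exps n" "a \<in> Exps n"
  shows "qc D x n d a \<noteq> 0"
proof -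
  have "mono x n d * mono x n a \<noteq> 0" "rexp D x n le (mono x n d * mono x n a) = addE d a"
    using mult_nonzero rexp_mult mono_nonzero rexp_mono assms by simp_all
  then show ?thesis using coef_rexp_nonzero unfolding qc_def by metis
qed

text \<open>Only the leading term of \<open>f\<close> contributes to the coefficient at \<open>d + exp f\<close>, because
  \<open>exp (x\<^sup>d * c * x\<^sup>b) = d + b\<close> for every other monomial \<open>c * x\<^sup>b\<close> of \<open>f\<close>.\<close>
lemma coef_mono_mult_lead:
  assumes f: "f \<noteq> 0" and lc: "coef D x n f (rexp D x n le f) = 1" and d: "d \<in> Exps n"
  shows "coef D x n (mono x n d * f) (addE d (rexp D x n le f)) = qc D x n d (rexp D x n le f)"
proof -
  let ?a = "rexp D x n le f" and ?S = "supp D x n f" and ?c = "coef D x n f"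
  let ?term = "\<lambda>b. coef D x n (mono x n d * (?c b * mono x n b)) (addE d ?a)"
  have aS: "?a \<in> ?S" and a: "?a \<in> Exps n" using rexp_in_supp rexp_in_Exps f by auto
  have other_terms: "?term b = 0" if b: "b \<in> ?S - {?a}" for b
  proof (rule ccontr)
    have cb: "?c b \<in> D" "?c b \<noteq> 0" and bE: "b \<in> Exps n"
      using b coef_in_D supp_subset_Exps by (auto simp: supp_def)
    have "rexp D x n le (?c b * mono x n b) = b"
      using rexp_D_mult[OF cb mono_nonzero[OF bE]] rexp_mono[OF bE] by simp
    then have "rexp D x n le (mono x n d * (?c b * mono x n b)) = addE d b"
      using rexp_mult mult_nonzero mono_nonzero rexp_mono cb bE d by simp
    moreover assume "?term b \<noteq> 0"
    ultimately have "le ?a b"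
      using le_rexp le_addE_left_cancel a bE d by metis
    then show False
      using le_rexp_supp[OF f] b le_antisym a bE by blast
  qed
  have "coef D x n (mono x n d * f) (addE d ?a) = (\<Sum>b\<in>?S. ?term b)"
    by (subst coef_expansion) (simp add: sum_distrib_left coef_sum finite_supp)
  also have "\<dots> = ?term ?a + (\<Sum>b\<in>?S - {?a}. ?term b)"
    by (rule sum.remove[OF finite_supp aS])
  also have "\<dots> = ?term ?a"
    using other_terms by simp
  finally show ?thesis
    using lc by (simp add: qc_def)
qed

lemma vsupp_subset: "vsupp D x n k f \<subseteq> Exps n \<times> {1..k}"
  using coef_outside_Exps by (auto simp: vsupp_def)

lemma finite_vsupp: "finite (vsupp D x n k f)"
proof (rule finite_subset)
  show "vsupp D x n k f \<subseteq> (\<Union>l\<in>{1..k}. supp D x n (f l) \<times> {l})"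
    by (auto simp: vsupp_def supp_def)
qed (simp add: finite_supp)

lemma vsupp_nonempty:
  assumes "f \<in> vecs k" "f \<noteq> (\<lambda>_. 0)"
  shows "vsupp D x n k f \<noteq> {}"
proof -
  obtain l where l: "f l \<noteq> 0" using assms(2) by auto
  then have "l \<in> {1..k}" using assms(1) by (auto simp: vecs_def)
  then have "(rexp D x n le (f l), l) \<in> vsupp D x n k f"
    using coef_rexp_nonzero[OF l] by (simp add: vsupp_def)
  then show ?thesis by blast
qed

lemma
  assumes "total_order_on (Exps n \<times> {1..k}) ord" "f \<in> vecs k" "f \<noteq> (\<lambda>_. 0)"
  shows vexp_in_vsupp: "vexp D x n k ord f \<in> vsupp D x n k f"
    and le_vexp: "\<forall>q\<in>vsupp D x n k f. ord q (vexp D x n k ord f)"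
  using maxby_greatest[OF total_order_on_subset[OF assms(1) vsupp_subset]
      finite_vsupp vsupp_nonempty[OF assms(2,3)]]
  unfolding vexp_def by blast+

lemma vexp_eqI:
  "total_order_on (Exps n \<times> {1..k}) ord \<Longrightarrow> p \<in> vsupp D x n k f \<Longrightarrow>
    \<forall>q\<in>vsupp D x n k f. ord q p \<Longrightarrow> vexp D x n k ord f = p"
  unfolding vexp_def by (rule maxby_eqI[OF total_order_on_subset[OF _ vsupp_subset]])

lemma vexp_eq_component:
  assumes ord: "total_order_on (Exps n \<times> {1..k}) ord"
    and mono: "\<And>a b l. a \<in> Exps n \<Longrightarrow> b \<in> Exps n \<Longrightarrow> l \<in> {1..k} \<Longrightarrow> le a b \<Longrightarrow> ord (a, l) (b, l)"
    and i: "i \<in> {1..k}" "f i \<noteq> 0"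
    and max: "\<forall>j\<in>{1..k}. f j \<noteq> 0 \<longrightarrow> ord (rexp D x n le (f j), j) (rexp D x n le (f i), i)"
  shows "vexp D x n k ord f = (rexp D x n le (f i), i)"
proof (rule vexp_eqI[OF ord])
  show "(rexp D x n le (f i), i) \<in> vsupp D x n k f"
    using i coef_rexp_nonzero by (auto simp: vsupp_def)
  show "\<forall>q\<in>vsupp D x n k f. ord q (rexp D x n le (f i), i)"
  proof (clarify)
    fix c j assume "(c, j) \<in> vsupp D x n k f"
    then have j: "j \<in> {1..k}" and cj: "coef D x n (f j) c \<noteq> 0" by (auto simp: vsupp_def)
    have fj: "f j \<noteq> 0" using nonzero_if_coef_nonzero[OF cj] .
    have "ord (c, j) (rexp D x n le (f j), j)"
      using mono[OF _ rexp_in_Exps[OF fj] j le_rexp[OF cj]] coef_outside_Exps cj by blast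
    moreover have "ord (rexp D x n le (f j), j) (rexp D x n le (f i), i)"
      using max j fj by blast
    moreover have "(c, j) \<in> Exps n \<times> {1..k}" "(rexp D x n le (f j), j) \<in> Exps n \<times> {1..k}"
      "(rexp D x n le (f i), i) \<in> Exps n \<times> {1..k}"
      using cj coef_outside_Exps j rexp_in_Exps[OF fj] rexp_in_Exps i by auto
    ultimately show "ord (c, j) (rexp D x n le (f i), i)"
      using ord unfolding total_order_on_def by blast
  qed
qed

lemma vexp_component:
  assumes ord: "total_order_on (Exps n \<times> {1..k}) ord"
    and mono: "\<And>a b l. a \<in> Exps n \<Longrightarrow> b \<in> Exps n \<Longrightarrow> l \<in> {1..k} \<Longrightarrow> le a b \<Longrightarrow> ord (a, l) (b, l)"
    and f: "f \<in> vecs k" "f \<noteq> (\<lambda>_. 0)"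
  obtains i where "i \<in> {1..k}" "f i \<noteq> 0" "vexp D x n k ord f = (rexp D x n le (f i), i)"
    "\<forall>j\<in>{1..k}. f j \<noteq> 0 \<longrightarrow> ord (rexp D x n le (f j), j) (rexp D x n le (f i), i)"
proof -
  obtain c i where ci: "vexp D x n k ord f = (c, i)" by fastforce
  have "(c, i) \<in> vsupp D x n k f"
    using vexp_in_vsupp[OF ord f] ci by simp
  then have i: "i \<in> {1..k}" and c: "coef D x n (f i) c \<noteq> 0" by (auto simp: vsupp_def)
  have fi: "f i \<noteq> 0" using nonzero_if_coef_nonzero[OF c] .
  let ?p = "(rexp D x n le (f i), i)"
  have p_in: "?p \<in> vsupp D x n k f" using i fi coef_rexp_nonzero by (auto simp: vsupp_def)
  have "ord ?p (c, i)" using le_vexp[OF ord f] p_in ci by auto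
  moreover have "ord (c, i) ?p"
    using mono[OF _ rexp_in_Exps[OF fi] i le_rexp[OF c]] coef_outside_Exps c by blast
  moreover have "(c, i) \<in> Exps n \<times> {1..k}" "?p \<in> Exps n \<times> {1..k}"
    using c coef_outside_Exps i rexp_in_Exps[OF fi] by auto
  ultimately have "vexp D x n k ord f = ?p"
    using ord ci unfolding total_order_on_def by metis
  moreover have "\<forall>j\<in>{1..k}. f j \<noteq> 0 \<longrightarrow> ord (rexp D x n le (f j), j) ?p"
    using le_vexp[OF ord f] \<open>vexp D x n k ord f = ?p\<close> coef_rexp_nonzero
    by (auto simp: vsupp_def)
  ultimately show ?thesis using that i fi by blast
qed

end

lemma Syz_left_mult:
  assumes "a \<in> Syz t g"
  shows "(\<lambda>k. c * a k) \<in> Syz t g"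
proof -
  have "(\<Sum>i\<in>{1..t}. c * a i * g i l) = c * (\<Sum>i\<in>{1..t}. a i * g i l)" for l
    by (simp add: sum_distrib_left mult.assoc)
  then show ?thesis using assms by (simp add: Syz_def vecs_def fun_eq_iff)
qed

locale monic_generators = pbw_ring D x n le
  for D :: "'r::ring_1 set" and x n le +
  fixes m t :: nat and g :: "nat \<Rightarrow> nat \<Rightarrow> 'r"
  assumes gen_vecs: "\<forall>i\<in>{1..t}. g i \<in> vecs m"
    and gen_nonzero: "\<forall>i\<in>{1..t}. g i \<noteq> (\<lambda>_. 0)"
    and gen_lcoef: "\<forall>i\<in>{1..t}. lcoef D x n m (TOP le) (g i) = 1"
begin

definition lexp :: "nat \<Rightarrow> (nat \<Rightarrow> nat) \<times> nat" where
  "lexp i = vexp D x n m (TOP le) (g i)"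

definition sexp :: "nat \<Rightarrow> (nat \<Rightarrow> nat)" where
  "sexp i = fst (lexp i)"

definition level :: "nat \<Rightarrow> nat" where
  "level i = snd (lexp i)"

definition lift :: "(nat \<Rightarrow> nat) \<times> nat \<Rightarrow> (nat \<Rightarrow> nat) \<times> nat" where
  "lift p = addP (lexp (snd p)) (fst p)"

definition lcm_exp :: "nat \<Rightarrow> nat \<Rightarrow> (nat \<Rightarrow> nat)" where
  "lcm_exp i j = supE (sexp i) (sexp j)"

definition cof :: "nat \<Rightarrow> nat \<Rightarrow> (nat \<Rightarrow> nat)" where
  "cof i j = subE (lcm_exp i j) (sexp i)"

lemma lexp_eq: "lexp i = (sexp i, level i)"
  by (simp add: sexp_def level_def)

lemma
  assumes "i \<in> {1..t}"
  shows lexp_in_vsupp: "lexp i \<in> vsupp D x n m (g i)"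
    and le_lexp: "\<forall>q\<in>vsupp D x n m (g i). TOP le q (lexp i)"
  using vexp_in_vsupp[OF total_order_on_TOP] le_vexp[OF total_order_on_TOP]
    gen_vecs gen_nonzero assms unfolding lexp_def by blast+

lemma sexp_in_Exps: "i \<in> {1..t} \<Longrightarrow> sexp i \<in> Exps n"
  using lexp_in_vsupp vsupp_subset lexp_eq by (metis mem_Sigma_iff subsetD)

lemma coef_gen_lead: "i \<in> {1..t} \<Longrightarrow> coef D x n (g i (level i)) (sexp i) = 1"
  using gen_lcoef unfolding lcoef_def sexp_def level_def lexp_def by auto

lemma gen_level_nonzero: "i \<in> {1..t} \<Longrightarrow> g i (level i) \<noteq> 0"
  using coef_gen_lead coef_0 one_neq_zero by force

lemma TOP_gen_component:
  assumes "i \<in> {1..t}" "g i l \<noteq> 0"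
  shows "TOP le (rexp D x n le (g i l), l) (sexp i, level i)"
proof -
  have "l \<in> {1..m}" using gen_vecs assms by (auto simp: vecs_def)
  then have "(rexp D x n le (g i l), l) \<in> vsupp D x n m (g i)"
    using coef_rexp_nonzero[OF assms(2)] by (simp add: vsupp_def)
  then show ?thesis using le_lexp[OF assms(1)] lexp_eq by simp
qed

lemma rexp_gen_level: "i \<in> {1..t} \<Longrightarrow> rexp D x n le (g i (level i)) = sexp i"
  using le_rexp[of "g i (level i)" "sexp i"] coef_gen_lead one_neq_zero
    TOP_gen_component[OF _ gen_level_nonzero] le_antisym rexp_in_Exps[OF gen_level_nonzero]
    sexp_in_Exps
  unfolding TOP_def by fastforce

lemma lift_eq: "snd p \<in> {1..t} \<Longrightarrow> lift p = (addE (sexp (snd p)) (fst p), level (snd p))"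
  by (simp add: lift_def addP_def lexp_eq)

lemma lift_in_Exps: "p \<in> Exps n \<times> {1..t} \<Longrightarrow> fst (lift p) \<in> Exps n"
  using lift_eq sexp_in_Exps by (auto simp: mem_Times_iff)

lemma lift_addP: "snd p \<in> {1..t} \<Longrightarrow> lift (addP p b) = addP (lift p) b"
  by (simp add: lift_eq addP_def addE_assoc)

lemma lift_same_index_less:
  assumes "k \<in> {1..t}" "a \<in> Exps n" "b \<in> Exps n"
    and "TOP le (lift (a, k)) (lift (b, k))" "lift (a, k) \<noteq> lift (b, k)"
  shows "le a b" "a \<noteq> b"
proof -
  have "TOP le (addE (sexp k) a, level k) (addE (sexp k) b, level k)"
    and ne: "addE (sexp k) a \<noteq> addE (sexp k) b"
    using assms(1,4,5) by (simp_all add: lift_eq)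
  then have "le (addE (sexp k) a) (addE (sexp k) b)"
    by (rule TOP_same_level_strict)
  then show "le a b"
    using le_addE_left_cancel assms(2,3) sexp_in_Exps[OF assms(1)] by blast
  show "a \<noteq> b" using ne by blast
qed

lemma coef_mult_gen_below:
  assumes k: "k \<in> {1..t}" and c: "coef D x n (a * g k l) \<gamma> \<noteq> 0"
  shows "TOP le (\<gamma>, l) (lift (rexp D x n le a, k))"
proof -
  have a: "a \<noteq> 0" and gkl: "g k l \<noteq> 0" using nonzero_if_coef_nonzero[OF c] by auto
  have E: "\<gamma> \<in> Exps n" "rexp D x n le a \<in> Exps n" "rexp D x n le (g k l) \<in> Exps n"
    using c coef_outside_Exps rexp_in_Exps a gkl by blast+
  let ?\<beta> = "addE (rexp D x n le (g k l)) (rexp D x n le a)"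
  have "rexp D x n le (a * g k l) = ?\<beta>"
    using rexp_mult[OF a gkl] by (simp add: addE_commute)
  then have "TOP le (\<gamma>, l) (?\<beta>, l)"
    using TOP_same_level le_rexp[OF c] by metis
  moreover have "TOP le (?\<beta>, l) (addE (sexp k) (rexp D x n le a), level k)"
    using TOP_addP[OF _ _ E(2) TOP_gen_component[OF k gkl]] E sexp_in_Exps[OF k]
    by (simp add: addP_def)
  ultimately have "TOP le (\<gamma>, l) (addE (sexp k) (rexp D x n le a), level k)"
    using TOP_trans[of "(\<gamma>, l)" "(?\<beta>, l)"] E sexp_in_Exps[OF k] by simp
  then show ?thesis using k by (simp add: lift_eq)
qed

lemma ordG_iff:
  "ordG D x n le m g p q \<longleftrightarrow>
     (TOP le (lift p) (lift q) \<and> lift p \<noteq> lift q) \<or> (lift p = lift q \<and> snd q \<le> snd p)"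
  by (simp add: ordG_def lift_def lexp_def Let_def)

lemma TOP_lift_if_ordG: "ordG D x n le m g p q \<Longrightarrow> TOP le (lift p) (lift q)"
  unfolding ordG_iff using TOP_refl by metis

lemma total_order_on_ordG: "total_order_on (Exps n \<times> {1..t}) (ordG D x n le m g)"
proof -
  have "total_order_on (lift ` (Exps n \<times> {1..t})) (TOP le)"
  proof (rule total_order_on_subset[OF total_order_on_TOP[of UNIV]], rule image_subsetI)
    fix p assume "p \<in> Exps n \<times> {1..t}"
    then show "lift p \<in> Exps n \<times> UNIV" using lift_in_Exps[of p] by (simp add: mem_Times_iff)
  qed
  moreover have "p = q" if "p \<in> Exps n \<times> {1..t}" "q \<in> Exps n \<times> {1..t}" "lift p = lift q" "snd p = snd q"
    for p q
    using that by (auto simp: lift_eq prod_eq_iff)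
  ultimately show ?thesis
    unfolding ordG_iff[abs_def] by (rule total_order_on_lex_comb)
qed

lemma ordG_same_index:
  assumes "a \<in> Exps n" "b \<in> Exps n" "k \<in> {1..t}" "le a b"
  shows "ordG D x n le m g (a, k) (b, k)"
  using le_addE_left[OF assms(1,2) sexp_in_Exps[OF assms(3)] assms(4)] assms(3)
  unfolding ordG_iff by (auto simp: lift_eq TOP_def)

lemma ordG_addP:
  assumes p: "p \<in> Exps n \<times> {1..t}" and q: "q \<in> Exps n \<times> {1..t}" and b: "b \<in> Exps n"
    and pq: "ordG D x n le m g p q"
  shows "ordG D x n le m g (addP p b) (addP q b)"
proof -
  have lift_b: "lift (addP p b) = addP (lift p) b" "lift (addP q b) = addP (lift q) b"
    using p q by (simp_all add: lift_addP mem_Times_iff)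
  have "TOP le (lift p) (lift q) \<Longrightarrow> TOP le (addP (lift p) b) (addP (lift q) b)"
    using TOP_addP lift_in_Exps p q b by blast
  then show ?thesis
    using pq unfolding ordG_iff lift_b by (auto simp: addP_inj)
qed

lemma vexp_ordG_eq_component:
  "f \<in> vecs t \<Longrightarrow> i \<in> {1..t} \<Longrightarrow> f i \<noteq> 0 \<Longrightarrow>
   \<forall>j\<in>{1..t}. f j \<noteq> 0 \<longrightarrow> ordG D x n le m g (rexp D x n le (f j), j) (rexp D x n le (f i), i) \<Longrightarrow>
   vexp D x n t (ordG D x n le m g) f = (rexp D x n le (f i), i)"
  by (rule vexp_eq_component[OF total_order_on_ordG ordG_same_index])

lemma vexp_ordG_component:
  assumes "f \<in> vecs t" "f \<noteq> (\<lambda>_. 0)"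
  obtains i where "i \<in> {1..t}" "f i \<noteq> 0" "vexp D x n t (ordG D x n le m g) f = (rexp D x n le (f i), i)"
    "\<forall>j\<in>{1..t}. f j \<noteq> 0 \<longrightarrow> ordG D x n le m g (rexp D x n le (f j), j) (rexp D x n le (f i), i)"
  using vexp_component[OF total_order_on_ordG ordG_same_index assms] by blast

lemma vexp_ordG_mono_mult:
  assumes f: "f \<in> vecs t" "f \<noteq> (\<lambda>_. 0)" and b: "b \<in> Exps n"
  shows "(\<lambda>k. mono x n b * f k) \<noteq> (\<lambda>_. 0)"
    "vexp D x n t (ordG D x n le m g) (\<lambda>k. mono x n b * f k) = addP (vexp D x n t (ordG D x n le m g) f) b"
proof -
  obtain i where i: "i \<in> {1..t}" "f i \<noteq> 0"
    and vexp_f: "vexp D x n t (ordG D x n le m g) f = (rexp D x n le (f i), i)"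
    and max: "\<forall>j\<in>{1..t}. f j \<noteq> 0 \<longrightarrow> ordG D x n le m g (rexp D x n le (f j), j) (rexp D x n le (f i), i)"
    using vexp_ordG_component[OF f] by blast
  let ?bf = "\<lambda>k. mono x n b * f k"
  have rexp_bf: "rexp D x n le (?bf k) = addE (rexp D x n le (f k)) b" if "f k \<noteq> 0" for k
  proof -
    have "rexp D x n le (?bf k) = addE b (rexp D x n le (f k))"
      using rexp_mult[OF mono_nonzero[OF b] that] rexp_mono[OF b] by simp
    then show ?thesis by (metis addE_commute)
  qed
  have bf_nonzero: "?bf k \<noteq> 0 \<longleftrightarrow> f k \<noteq> 0" for k
    using mult_nonzero[OF mono_nonzero[OF b], of "f k"] by fastforce
  show "?bf \<noteq> (\<lambda>_. 0)"
  proof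
    assume "?bf = (\<lambda>_. 0)"
    then have "?bf i = 0" by (rule fun_cong)
    then show False using bf_nonzero i(2) by blast
  qed
  have "vexp D x n t (ordG D x n le m g) ?bf = (rexp D x n le (?bf i), i)"
  proof (rule vexp_ordG_eq_component)
    show "?bf \<in> vecs t" using f(1) by (simp add: vecs_def)
    show "?bf i \<noteq> 0" using bf_nonzero i(2) by blast
    show "\<forall>j\<in>{1..t}. ?bf j \<noteq> 0 \<longrightarrow>
        ordG D x n le m g (rexp D x n le (?bf j), j) (rexp D x n le (?bf i), i)"
    proof (intro ballI impI)
      fix j assume j: "j \<in> {1..t}" and "?bf j \<noteq> 0"
      then have fj: "f j \<noteq> 0" using bf_nonzero by blast
      have "ordG D x n le m g (addP (rexp D x n le (f j), j) b) (addP (rexp D x n le (f i), i) b)"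
        by (rule ordG_addP[OF _ _ b]) (use max j fj i rexp_in_Exps in auto)
      then show "ordG D x n le m g (rexp D x n le (?bf j), j) (rexp D x n le (?bf i), i)"
        using rexp_bf[OF fj] rexp_bf[OF i(2)] by (simp add: addP_def)
    qed
  qed (use i in simp)
  then show "vexp D x n t (ordG D x n le m g) ?bf = addP (vexp D x n t (ordG D x n le m g) f) b"
    using vexp_f rexp_bf[OF i(2)] by (simp add: addP_def)
qed

lemma addE_sexp_cof: "addE (sexp i) (cof i j) = lcm_exp i j"
  by (simp add: cof_def lcm_exp_def addE_subE_supE)

lemma lcm_exp_commute: "lcm_exp j i = lcm_exp i j"
  by (simp add: lcm_exp_def supE_commute)

lemma cof_in_Exps: "i \<in> {1..t} \<Longrightarrow> j \<in> {1..t} \<Longrightarrow> cof i j \<in> Exps n"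
  by (simp add: cof_def lcm_exp_def sexp_in_Exps)

lemma lift_cof: "i \<in> {1..t} \<Longrightarrow> lift (cof i j, i) = (lcm_exp i j, level i)"
  by (simp add: lift_eq addE_sexp_cof)

lemma Ipairs_iff:
  "(i, j) \<in> Ipairs D x n le m t g \<longleftrightarrow> i \<in> {1..t} \<and> j \<in> {1..t} \<and> i < j \<and> level i = level j"
  by (auto simp: Ipairs_def level_def lexp_def)

lemma rcoef_eq: "rcoef D x n le m g i j = dinv D (qc D x n (cof i j) (sexp i)) * mono x n (cof i j)"
  by (simp add: rcoef_def Let_def sexp_def lexp_def cof_def lcm_exp_def)

lemma
  assumes i: "i \<in> {1..t}" and j: "j \<in> {1..t}"
  shows rcoef_nonzero: "rcoef D x n le m g i j \<noteq> 0"
    and rexp_rcoef: "rexp D x n le (rcoef D x n le m g i j) = cof i j"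
    and coef_rcoef_mult_lead: "coef D x n (rcoef D x n le m g i j * g i (level i)) (lcm_exp i j) = 1"
proof -
  let ?q = "qc D x n (cof i j) (sexp i)"
  have q: "?q \<in> D" "?q \<noteq> 0"
    using qc_in_D qc_nonzero cof_in_Exps sexp_in_Exps i j by auto
  have inv: "dinv D ?q \<in> D" "dinv D ?q \<noteq> 0" "dinv D ?q * ?q = 1"
    using dinv_in_D[OF q] dinv_left[OF q] one_neq_zero by auto
  have mono_cof: "mono x n (cof i j) \<noteq> 0" "rexp D x n le (mono x n (cof i j)) = cof i j"
    using mono_nonzero rexp_mono cof_in_Exps i j by auto
  show "rcoef D x n le m g i j \<noteq> 0"
    unfolding rcoef_eq using mult_nonzero inv(2) mono_cof(1) by blast
  show "rexp D x n le (rcoef D x n le m g i j) = cof i j"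
    unfolding rcoef_eq using rexp_D_mult[OF inv(1,2) mono_cof(1)] mono_cof(2) by simp
  have "coef D x n (mono x n (cof i j) * g i (level i)) (addE (cof i j) (sexp i)) = ?q"
    using coef_mono_mult_lead[OF gen_level_nonzero[OF i] _ cof_in_Exps[OF i j]]
      coef_gen_lead[OF i] rexp_gen_level[OF i] by simp
  then have "coef D x n (mono x n (cof i j) * g i (level i)) (lcm_exp i j) = ?q"
    by (metis addE_commute addE_sexp_cof)
  then show "coef D x n (rcoef D x n le m g i j * g i (level i)) (lcm_exp i j) = 1"
    unfolding rcoef_eq using coef_D_mult[OF inv(1)] inv(3) by (simp add: mult.assoc)
qed

lemma SP_in_vecs: "i \<in> {1..t} \<Longrightarrow> j \<in> {1..t} \<Longrightarrow> SP D x n le m g i j \<in> vecs m"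
  using gen_vecs by (auto simp: vecs_def SP_def)

text \<open>The leading terms of \<open>r\<^sub>i\<^sub>j g\<^sub>i\<close> and \<open>r\<^sub>j\<^sub>i g\<^sub>j\<close> are both \<open>x\<^sup>\<alpha> e\<^sub>l\<close> with
  \<open>\<alpha> = \<alpha>\<^sub>i \<or> \<alpha>\<^sub>j\<close>, each with coefficient 1, so they cancel in the S-polynomial.\<close>
lemma vexp_SP_less:
  assumes i: "i \<in> {1..t}" and j: "j \<in> {1..t}" and lv: "level i = level j"
    and SP: "SP D x n le m g i j \<noteq> (\<lambda>_. 0)"
  shows "TOP le (vexp D x n m (TOP le) (SP D x n le m g i j)) (lcm_exp i j, level i)"
    "vexp D x n m (TOP le) (SP D x n le m g i j) \<noteq> (lcm_exp i j, level i)"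
proof -
  obtain \<gamma> l where \<gamma>l: "vexp D x n m (TOP le) (SP D x n le m g i j) = (\<gamma>, l)" by fastforce
  then have "(\<gamma>, l) \<in> vsupp D x n m (SP D x n le m g i j)"
    using vexp_in_vsupp[OF total_order_on_TOP SP_in_vecs[OF i j] SP] by simp
  then have c: "coef D x n (rcoef D x n le m g i j * g i l) \<gamma>
      - coef D x n (rcoef D x n le m g j i * g j l) \<gamma> \<noteq> 0"
    by (simp add: vsupp_def SP_def coef_diff)
  then consider "coef D x n (rcoef D x n le m g i j * g i l) \<gamma> \<noteq> 0"
    | "coef D x n (rcoef D x n le m g j i * g j l) \<gamma> \<noteq> 0"
    by fastforce
  then show "TOP le (vexp D x n m (TOP le) (SP D x n le m g i j)) (lcm_exp i j, level i)"
  proof cases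
    case 1
    then show ?thesis using coef_mult_gen_below[OF i 1] \<gamma>l rexp_rcoef[OF i j] lift_cof[OF i] by simp
  next
    case 2
    then show ?thesis
      using coef_mult_gen_below[OF j 2] \<gamma>l rexp_rcoef[OF j i] lift_cof[OF j] lcm_exp_commute lv
      by simp
  qed
  have "coef D x n (SP D x n le m g i j (level i)) (lcm_exp i j) = 0"
    using coef_rcoef_mult_lead[OF i j] coef_rcoef_mult_lead[OF j i] lv lcm_exp_commute
    by (simp add: SP_def coef_diff)
  then show "vexp D x n m (TOP le) (SP D x n le m g i j) \<noteq> (lcm_exp i j, level i)"
    using \<gamma>l c by (auto simp: SP_def coef_diff)
qed

text \<open>In a syzygy the leading term of the component realising the exponent must be cancelled
  by another component with the same lifted exponent.\<close>
lemma syz_lead_partner: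
  assumes a: "a \<in> Syz t g" and i: "i \<in> {1..t}" "a i \<noteq> 0"
    and max: "\<forall>k\<in>{1..t}. a k \<noteq> 0 \<longrightarrow> ordG D x n le m g (rexp D x n le (a k), k) (rexp D x n le (a i), i)"
  obtains j where "j \<in> {1..t}" "j \<noteq> i" "a j \<noteq> 0" "lift (rexp D x n le (a j), j) = lift (rexp D x n le (a i), i)"
proof -
  let ?\<gamma> = "addE (sexp i) (rexp D x n le (a i))" and ?L = "level i"
  have lift_i: "lift (rexp D x n le (a i), i) = (?\<gamma>, ?L)" using i(1) by (simp add: lift_eq)
  have "rexp D x n le (a i * g i ?L) = ?\<gamma>"
    using rexp_mult[OF i(2) gen_level_nonzero[OF i(1)]] rexp_gen_level[OF i(1)]
    by (simp add: addE_commute)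
  then have lead: "coef D x n (a i * g i ?L) ?\<gamma> \<noteq> 0"
    using coef_rexp_nonzero mult_nonzero i(2) gen_level_nonzero[OF i(1)] by metis
  have "(\<Sum>k\<in>{1..t}. a k * g k ?L) = 0" using a by (simp add: Syz_def fun_eq_iff)
  then have "0 = (\<Sum>k\<in>{1..t}. coef D x n (a k * g k ?L) ?\<gamma>)"
    using coef_sum[of "{1..t}" "\<lambda>k. a k * g k ?L" ?\<gamma>] coef_0 by simp
  also have "\<dots> = coef D x n (a i * g i ?L) ?\<gamma> + (\<Sum>k\<in>{1..t} - {i}. coef D x n (a k * g k ?L) ?\<gamma>)"
    using sum.remove[of "{1..t}" i] i(1) by simp
  finally obtain j where j: "j \<in> {1..t}" "j \<noteq> i" and cj: "coef D x n (a j * g j ?L) ?\<gamma> \<noteq> 0"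
    using lead by (metis (no_types, lifting) DiffE add.right_neutral insertCI sum.neutral)
  have aj: "a j \<noteq> 0" using nonzero_if_coef_nonzero[OF cj] by auto
  have E: "fst (lift (rexp D x n le (a j), j)) \<in> Exps n" "fst (lift (rexp D x n le (a i), i)) \<in> Exps n"
    using lift_in_Exps rexp_in_Exps aj i j by auto
  have "TOP le (lift (rexp D x n le (a i), i)) (lift (rexp D x n le (a j), j))"
    using coef_mult_gen_below[OF j(1) cj] lift_i by simp
  moreover have "TOP le (lift (rexp D x n le (a j), j)) (lift (rexp D x n le (a i), i))"
    using TOP_lift_if_ordG max j aj by blast
  ultimately show ?thesis
    using that j aj TOP_antisym[OF E] by blast
qed

lemma syz_vexp_shift:
  assumes a: "a \<in> Syz t g" "a \<noteq> (\<lambda>_. 0)"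
  obtains i j b where "(i, j) \<in> Ipairs D x n le m t g" "b \<in> Exps n"
    "vexp D x n t (ordG D x n le m g) a = addP (cof i j, i) b"
proof -
  have "a \<in> vecs t" using a(1) by (simp add: Syz_def)
  then obtain i where i: "i \<in> {1..t}" "a i \<noteq> 0"
    and vexp_a: "vexp D x n t (ordG D x n le m g) a = (rexp D x n le (a i), i)"
    and max: "\<forall>k\<in>{1..t}. a k \<noteq> 0 \<longrightarrow> ordG D x n le m g (rexp D x n le (a k), k) (rexp D x n le (a i), i)"
    using vexp_ordG_component a(2) by blast
  obtain j where j: "j \<in> {1..t}" "j \<noteq> i" "a j \<noteq> 0"
    and lift_eq_ij: "lift (rexp D x n le (a j), j) = lift (rexp D x n le (a i), i)"
    using syz_lead_partner[OF a(1) i max] by blast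
  have "i \<le> j" using max j lift_eq_ij unfolding ordG_iff by auto
  moreover have "level j = level i"
    and sum_eq: "addE (sexp j) (rexp D x n le (a j)) = addE (sexp i) (rexp D x n le (a i))"
    using lift_eq_ij i j by (simp_all add: lift_eq)
  ultimately have "(i, j) \<in> Ipairs D x n le m t g" using i j by (simp add: Ipairs_iff)
  moreover have "addE (cof i j) (subE (rexp D x n le (a i)) (cof i j)) = rexp D x n le (a i)"
    using addE_eq_imp_cofactor_split[OF sum_eq] by (simp add: cof_def lcm_exp_def)
  then have "vexp D x n t (ordG D x n le m g) a = addP (cof i j, i) (subE (rexp D x n le (a i)) (cof i j))"
    using vexp_a by (simp add: addP_def)
  ultimately show ?thesis using that rexp_in_Exps[OF i(2)] Exps_subE by blast
qed

definition standard_repr :: "nat \<Rightarrow> nat \<Rightarrow> (nat \<Rightarrow> 'r) \<Rightarrow> bool" where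
  "standard_repr i j hk \<longleftrightarrow>
     SP D x n le m g i j = (\<lambda>l. \<Sum>k\<in>{1..t}. hk k * g k l) \<and>
     (\<forall>k\<in>{1..t}. hk k \<noteq> 0 \<longrightarrow> SP D x n le m g i j \<noteq> (\<lambda>_. 0) \<and>
        TOP le (lift (rexp D x n le (hk k), k)) (vexp D x n m (TOP le) (SP D x n le m g i j)))"

lemma standard_repr_term_less:
  assumes ij: "(i, j) \<in> Ipairs D x n le m t g" and sr: "standard_repr i j hk"
    and k: "k \<in> {1..t}" and hk: "hk k \<noteq> 0"
  shows "TOP le (lift (rexp D x n le (hk k), k)) (lcm_exp i j, level i)"
    "lift (rexp D x n le (hk k), k) \<noteq> (lcm_exp i j, level i)"
proof -
  have i: "i \<in> {1..t}" and j: "j \<in> {1..t}" and lv: "level i = level j"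
    using ij by (simp_all add: Ipairs_iff)
  let ?E = "vexp D x n m (TOP le) (SP D x n le m g i j)"
  have SP: "SP D x n le m g i j \<noteq> (\<lambda>_. 0)"
    and below: "TOP le (lift (rexp D x n le (hk k), k)) ?E"
    using sr k hk by (auto simp: standard_repr_def)
  have "?E \<in> Exps n \<times> {1..m}"
    using vexp_in_vsupp[OF total_order_on_TOP SP_in_vecs[OF i j] SP] vsupp_subset by blast
  then have E: "fst (lift (rexp D x n le (hk k), k)) \<in> Exps n" "fst ?E \<in> Exps n"
    "fst (lcm_exp i j, level i) \<in> Exps n"
    using lift_in_Exps k rexp_in_Exps[OF hk] sexp_in_Exps i j
    by (auto simp: lcm_exp_def mem_Times_iff)
  show "TOP le (lift (rexp D x n le (hk k), k)) (lcm_exp i j, level i)"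
    using TOP_trans[OF E(1,2) E(3) below vexp_SP_less(1)[OF i j lv SP]] .
  show "lift (rexp D x n le (hk k), k) \<noteq> (lcm_exp i j, level i)"
    using TOP_antisym[OF E(2,3) vexp_SP_less(1)[OF i j lv SP]] vexp_SP_less(2)[OF i j lv SP] below
    by metis
qed

lemma syzvec_in_Syz:
  assumes ij: "(i, j) \<in> Ipairs D x n le m t g" and sr: "standard_repr i j (h i j)"
  shows "syzvec D x n le m t g h i j \<in> Syz t g"
proof -
  have i: "i \<in> {1..t}" and j: "j \<in> {1..t}" and "i \<noteq> j"
    using ij by (auto simp: Ipairs_iff)
  have "syzvec D x n le m t g h i j k * g k l
      = (if k = i then rcoef D x n le m g i j * g i l else 0)
        - (if k = j then rcoef D x n le m g j i * g j l else 0) - h i j k * g k l"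
    if "k \<in> {1..t}" for k l
    using that by (auto simp: syzvec_def algebra_simps)
  then have "(\<Sum>k\<in>{1..t}. syzvec D x n le m t g h i j k * g k l)
      = rcoef D x n le m g i j * g i l - rcoef D x n le m g j i * g j l
        - (\<Sum>k\<in>{1..t}. h i j k * g k l)" for l
    using i j by (simp add: sum_subtractf)
  moreover have "rcoef D x n le m g i j * g i l - rcoef D x n le m g j i * g j l
      = (\<Sum>k\<in>{1..t}. h i j k * g k l)" for l
    using sr unfolding standard_repr_def SP_def by (metis (no_types, lifting))
  ultimately show ?thesis using i j by (simp add: Syz_def vecs_def syzvec_def)
qed

lemma syzvec_pair_components:
  assumes ij: "(i, j) \<in> Ipairs D x n le m t g" and sr: "standard_repr i j (h i j)"
  shows "syzvec D x n le m t g h i j i \<noteq> 0"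
    "rexp D x n le (syzvec D x n le m t g h i j i) = cof i j"
    "syzvec D x n le m t g h i j j \<noteq> 0"
    "rexp D x n le (syzvec D x n le m t g h i j j) = cof j i"
proof -
  have i: "i \<in> {1..t}" and j: "j \<in> {1..t}" and "i < j" and lv: "level i = level j"
    using ij by (auto simp: Ipairs_iff)
  have comp: "r - h i j k \<noteq> 0 \<and> rexp D x n le (r - h i j k) = d"
    if k: "k \<in> {1..t}" and d: "d \<in> Exps n" and lift_d: "lift (d, k) = (lcm_exp i j, level i)"
      and r: "r \<noteq> 0" "rexp D x n le r = d" for k d r
  proof -
    have "le (rexp D x n le (h i j k)) d \<and> rexp D x n le (h i j k) \<noteq> d" if hk: "h i j k \<noteq> 0"
      using lift_same_index_less[OF k rexp_in_Exps[OF hk] d] standard_repr_term_less[OF ij sr k hk]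
        lift_d by simp
    then show ?thesis using rexp_diff_lower[OF r(1)] r(2) by simp
  qed
  have "syzvec D x n le m t g h i j i = rcoef D x n le m g i j - h i j i"
    using i \<open>i < j\<close> by (simp add: syzvec_def)
  then show "syzvec D x n le m t g h i j i \<noteq> 0"
    "rexp D x n le (syzvec D x n le m t g h i j i) = cof i j"
    using comp[OF i cof_in_Exps[OF i j] lift_cof[OF i] rcoef_nonzero[OF i j] rexp_rcoef[OF i j]]
    by simp_all
  have "syzvec D x n le m t g h i j j = - rcoef D x n le m g j i - h i j j"
    using j \<open>i < j\<close> by (simp add: syzvec_def)
  moreover have "lift (cof j i, j) = (lcm_exp i j, level i)"
    using lift_cof[OF j] lcm_exp_commute lv by simp
  ultimately show "syzvec D x n le m t g h i j j \<noteq> 0"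
    "rexp D x n le (syzvec D x n le m t g h i j j) = cof j i"
    using comp[OF j cof_in_Exps[OF j i]] rcoef_nonzero[OF j i] rexp_rcoef[OF j i] rexp_uminus
    by simp_all
qed

lemma vexp_syzvec:
  assumes ij: "(i, j) \<in> Ipairs D x n le m t g" and sr: "standard_repr i j (h i j)"
  shows "vexp D x n t (ordG D x n le m g) (syzvec D x n le m t g h i j) = (cof i j, i)"
proof -
  let ?s = "syzvec D x n le m t g h i j"
  have i: "i \<in> {1..t}" and j: "j \<in> {1..t}" and "i < j" and lv: "level i = level j"
    using ij by (auto simp: Ipairs_iff)
  have lift_i: "lift (cof i j, i) = (lcm_exp i j, level i)" using lift_cof[OF i] .
  have "ordG D x n le m g (rexp D x n le (?s k), k) (cof i j, i)" if k: "k \<in> {1..t}" "?s k \<noteq> 0" for k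
  proof -
    consider "k = i" | "k = j" | "k \<noteq> i" "k \<noteq> j" by blast
    then show ?thesis
    proof cases
      case 1
      then show ?thesis using syzvec_pair_components[where h = h, OF ij sr] by (simp add: ordG_iff)
    next
      case 2
      have "lift (cof j i, j) = (lcm_exp i j, level i)"
        using lift_cof[OF j] lcm_exp_commute lv by simp
      then show ?thesis
        using 2 syzvec_pair_components[where h = h, OF ij sr] lift_i \<open>i < j\<close> by (simp add: ordG_iff)
    next
      case 3
      then have "?s k = - h i j k" using k(1) by (simp add: syzvec_def)
      then have "h i j k \<noteq> 0" "rexp D x n le (?s k) = rexp D x n le (h i j k)"
        using k(2) rexp_uminus by auto
      then show ?thesis
        using standard_repr_term_less[OF ij sr k(1)] lift_i by (simp add: ordG_iff)
    qed
  qed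
  then show ?thesis
    using vexp_ordG_eq_component[of ?s i] syzvec_pair_components[where h = h, OF ij sr] i j
    by (simp add: syzvec_def vecs_def)
qed

lemma vexp_Syz_eq_syzvec_shifts:
  assumes sr: "\<forall>(i, j)\<in>Ipairs D x n le m t g. standard_repr i j (h i j)"
  defines "G \<equiv> {syzvec D x n le m t g h i j | i j. (i, j) \<in> Ipairs D x n le m t g}"
  shows "{vexp D x n t (ordG D x n le m g) f | f. f \<in> Syz t g \<and> f \<noteq> (\<lambda>_. 0)}
    = (\<Union>s\<in>G. {addP (vexp D x n t (ordG D x n le m g) s) b | b. b \<in> Exps n})"
proof (intro equalityI subsetI)
  let ?vexp = "vexp D x n t (ordG D x n le m g)"
  fix e assume "e \<in> {?vexp f | f. f \<in> Syz t g \<and> f \<noteq> (\<lambda>_. 0)}"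
  then obtain f where "f \<in> Syz t g" "f \<noteq> (\<lambda>_. 0)" "e = ?vexp f" by blast
  then obtain i j b where "(i, j) \<in> Ipairs D x n le m t g" "b \<in> Exps n" "e = addP (cof i j, i) b"
    using syz_vexp_shift by metis
  then show "e \<in> (\<Union>s\<in>G. {addP (?vexp s) b | b. b \<in> Exps n})"
    unfolding G_def using vexp_syzvec sr by fastforce
next
  let ?vexp = "vexp D x n t (ordG D x n le m g)" and ?s = "syzvec D x n le m t g h"
  fix e assume "e \<in> (\<Union>s\<in>G. {addP (?vexp s) b | b. b \<in> Exps n})"
  then obtain i j b where ij: "(i, j) \<in> Ipairs D x n le m t g" and b: "b \<in> Exps n"
    and e: "e = addP (?vexp (?s i j)) b"
    unfolding G_def by blast
  have s: "?s i j \<in> Syz t g" "?s i j \<noteq> (\<lambda>_. 0)"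
    using syzvec_in_Syz syzvec_pair_components(1) ij sr by (fastforce dest: fun_cong)+
  then have "(\<lambda>k. mono x n b * ?s i j k) \<in> Syz t g" by (simp add: Syz_left_mult)
  moreover have "(\<lambda>k. mono x n b * ?s i j k) \<noteq> (\<lambda>_. 0)" "e = ?vexp (\<lambda>k. mono x n b * ?s i j k)"
    using vexp_ordG_mono_mult[OF _ s(2) b] s(1) e by (simp_all add: Syz_def)
  ultimately show "e \<in> {?vexp f | f. f \<in> Syz t g \<and> f \<noteq> (\<lambda>_. 0)}" by blast
qed

lemma is_GB_syzvecs:
  assumes sr: "\<forall>(i, j)\<in>Ipairs D x n le m t g. standard_repr i j (h i j)"
  shows "is_GB D x n t (ordG D x n le m g)
           {syzvec D x n le m t g h i j | i j. (i, j) \<in> Ipairs D x n le m t g} (Syz t g)"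
proof -
  let ?I = "Ipairs D x n le m t g" and ?s = "syzvec D x n le m t g h"
  let ?G = "{?s i j | i j. (i, j) \<in> ?I}"
  have "finite ?I"
    by (rule finite_subset[of _ "{1..t} \<times> {1..t}"]) (auto simp: Ipairs_iff)
  moreover have "?G = (\<lambda>(i, j). ?s i j) ` ?I" by auto
  ultimately have "finite ?G" by simp
  moreover have "?G \<subseteq> Syz t g" using syzvec_in_Syz sr by blast
  moreover have "(\<lambda>_. 0) \<notin> ?G"
    using syzvec_pair_components(1) sr by (fastforce dest: fun_cong)
  ultimately show ?thesis
    using vexp_Syz_eq_syzvec_shifts[OF sr] by (simp add: is_GB_def)
qed

end

theorem mainTheorem18:
  fixes D :: "'r::ring_1 set" and x :: "nat \<Rightarrow> 'r" and n :: nat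
    and le :: "(nat \<Rightarrow> nat) \<Rightarrow> (nat \<Rightarrow> nat) \<Rightarrow> bool"
    and m t :: nat and g :: "nat \<Rightarrow> nat \<Rightarrow> 'r" and h :: "nat \<Rightarrow> nat \<Rightarrow> nat \<Rightarrow> 'r"
  assumes PBW: "left_PBW D x n le"
    and gvec: "\<forall>i\<in>{1..t}. g i \<in> vecs m"
    and ginj: "inj_on g {1..t}"
    and GB: "is_GB D x n m (TOP le) (g ` {1..t}) (submod t g)"
    and lc1: "\<forall>i\<in>{1..t}. lcoef D x n m (TOP le) (g i) = 1"
    and hrep: "\<forall>(i, j)\<in>Ipairs D x n le m t g.
        SP D x n le m g i j = (\<lambda>l. \<Sum>k\<in>{1..t}. h i j k * g k l)"
    and hzero: "\<forall>(i, j)\<in>Ipairs D x n le m t g.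
        SP D x n le m g i j = (\<lambda>_. 0) \<longrightarrow> (\<forall>k\<in>{1..t}. h i j k = 0)"
    and hmax: "\<forall>(i, j)\<in>Ipairs D x n le m t g.
        SP D x n le m g i j \<noteq> (\<lambda>_. 0) \<longrightarrow>
          (\<forall>k\<in>{1..t}. h i j k \<noteq> 0 \<longrightarrow>
             TOP le (addP (vexp D x n m (TOP le) (g k)) (rexp D x n le (h i j k)))
                    (vexp D x n m (TOP le) (SP D x n le m g i j))) \<and>
          (\<exists>k\<in>{1..t}. h i j k \<noteq> 0 \<and>
             addP (vexp D x n m (TOP le) (g k)) (rexp D x n le (h i j k))
               = vexp D x n m (TOP le) (SP D x n le m g i j))"
  shows "is_GB D x n t (ordG D x n le m g)
           {syzvec D x n le m t g h i j | i j. (i, j) \<in> Ipairs D x n le m t g}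
           (Syz t g)"
proof -
  \<comment> \<open>The Groebner property of G is only used for \<open>0 \<notin> G\<close> (and to guarantee that the
    \<open>h\<^sub>i\<^sub>j\<^sub>k\<close> exist).\<close>
  have "\<forall>i\<in>{1..t}. g i \<noteq> (\<lambda>_. 0)" using GB unfolding is_GB_def by force
  then interpret monic_generators D x n le m t g
    using PBW gvec lc1 by unfold_locales
  have "\<forall>(i, j)\<in>Ipairs D x n le m t g. standard_repr i j (h i j)"
    using hrep hzero hmax by (fastforce simp: standard_repr_def lift_def lexp_def)
  then show ?thesis by (rule is_GB_syzvecs)
qed

end
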